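(* Let $v(0)\in\mathcal N^*$ and $T>0$. Let $v^{crit}$ be the solution of the critical equations with initial condition $v(0)$, and $v^{sub}$ the solution of the subcritical equations with initial condition $v(0)$ and a continuous rate function $\lambda$ bounded below by a positive constant. Then $$\int_0^T\Phi^{sub}(t)dt-\int_0^T\lambda(t)dt\le\int_0^T\Phi^{crit}(t)dt.$$ If $v^{alt}$ is the solution of the alternating equations with initial condition $v(0)$ and an arbitrary sequence of burning times, then $$\int_0^T\Phi^{alt}(t)dt\le\int_0^T\Phi^{crit}(t)dt.$$
   Context: $\mathcal N$: sequences $v=(v_k)_{k\ge1}$ of nonnegative reals with $\sum_kv_k<\infty$; $\mathcal N^*$: those with finitely many nonzero terms; $m_0=\sum_kv_k$. Subcritical equations with rate $\lambda$: $v(t)\in\mathcal N$, $v_k(t)=v_k(0)+\int_0^t\big(\tfrac k2\sum_{l=1}^{k-1}v_lv_{k-l}-kv_km_0(s)-\lambda(s)kv_k\big)ds$ for all $k$, with $\Phi(t)=m_0(0)-m_0(t)$ nondecreasing in $[0,m_0(0))$. Critical equations: the same with $\lambda\equiv0$. For these, $\Phi^{sub}(t)=m_0(0)-m^{sub}_0(t)$, $\Phi^{crit}(t)=m_0(0)-m^{crit}_0(t)$. Alternating equations with burning times $0=\beta_0<\beta_1<\dots$ (no accumulation), $M(t)=\max\{i:\beta_i<t\}$: $\dot v_k=\tfrac k2\sum_{l=1}^{k-1}v_lv_{k-l}-kv_km_0(\beta_{M(t)})$, $v_k$ continuous; $\Phi^{alt}(t)=m_0(0)-m^{alt}_0(\beta_{M(t)})$.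 *)

theory Defs
  imports "HOL-Analysis.Analysis"
begin

text \<open>Sequences v = (v_k)_{k \<ge> 1} are represented as functions nat \<Rightarrow> real;
  the value at index 0 is irrelevant and ignored.\<close>

definition in_N :: "(nat \<Rightarrow> real) \<Rightarrow> bool" where
  "in_N v \<longleftrightarrow> (\<forall>k\<ge>1. 0 \<le> v k) \<and> summable (\<lambda>k. v (Suc k))"

definition in_N_star :: "(nat \<Rightarrow> real) \<Rightarrow> bool" where
  "in_N_star v \<longleftrightarrow> in_N v \<and> finite {k. 1 \<le> k \<and> v k \<noteq> 0}"

definition m0 :: "(nat \<Rightarrow> real) \<Rightarrow> real" where
  "m0 v = (\<Sum>k. v (Suc k))"

definition coag :: "(nat \<Rightarrow> real) \<Rightarrow> nat \<Rightarrow> real" where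
  "coag v k = (real k / 2) * (\<Sum>l=1..k-1. v l * v (k - l))"

definition sub_sol :: "(real \<Rightarrow> real) \<Rightarrow> (nat \<Rightarrow> real) \<Rightarrow> (real \<Rightarrow> nat \<Rightarrow> real) \<Rightarrow> bool" where
  "sub_sol lam v0 v \<longleftrightarrow>
     v 0 = v0 \<and>
     (\<forall>t\<ge>0. in_N (v t)) \<and>
     (\<forall>k\<ge>1. \<forall>t\<ge>0.
        ((\<lambda>s. coag (v s) k - real k * v s k * m0 (v s) - lam s * real k * v s k)
           has_integral (v t k - v 0 k)) {0..t}) \<and>
     mono_on {0..} (\<lambda>t. m0 (v 0) - m0 (v t)) \<and>
     (\<forall>t\<ge>0. 0 \<le> m0 (v 0) - m0 (v t) \<and> m0 (v 0) - m0 (v t) < m0 (v 0))"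

definition crit_sol :: "(nat \<Rightarrow> real) \<Rightarrow> (real \<Rightarrow> nat \<Rightarrow> real) \<Rightarrow> bool" where
  "crit_sol v0 v \<longleftrightarrow> sub_sol (\<lambda>_. 0) v0 v"

definition Phi :: "(real \<Rightarrow> nat \<Rightarrow> real) \<Rightarrow> real \<Rightarrow> real" where
  "Phi v t = m0 (v 0) - m0 (v t)"

text \<open>Burning times: 0 = beta_0 < beta_1 < ..., without accumulation points.\<close>
definition burning_times :: "(nat \<Rightarrow> real) \<Rightarrow> bool" where
  "burning_times \<beta> \<longleftrightarrow> \<beta> 0 = 0 \<and> strict_mono \<beta> \<and> filterlim \<beta> at_top sequentially"

definition Mt :: "(nat \<Rightarrow> real) \<Rightarrow> real \<Rightarrow> nat" where
  "Mt \<beta> t = (GREATEST i. \<beta> i < t)"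

definition alt_sol :: "(nat \<Rightarrow> real) \<Rightarrow> (nat \<Rightarrow> real) \<Rightarrow> (real \<Rightarrow> nat \<Rightarrow> real) \<Rightarrow> bool" where
  "alt_sol \<beta> v0 v \<longleftrightarrow>
     v 0 = v0 \<and>
     (\<forall>t\<ge>0. in_N (v t)) \<and>
     (\<forall>k\<ge>1. continuous_on {0..} (\<lambda>t. v t k)) \<and>
     (\<forall>k\<ge>1. \<forall>t>0. t \<notin> range \<beta> \<longrightarrow>
        ((\<lambda>s. v s k) has_real_derivative
           (coag (v t) k - real k * v t k * m0 (v (\<beta> (Mt \<beta> t))))) (at t))"

definition Phi_alt :: "(nat \<Rightarrow> real) \<Rightarrow> (real \<Rightarrow> nat \<Rightarrow> real) \<Rightarrow> real \<Rightarrow> real" where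
  "Phi_alt \<beta> v t = m0 (v 0) - m0 (v (\<beta> (Mt \<beta> t)))"

end

theory Submission
  imports Defs
begin

text \<open>Let \<open>\<mu>\<close> be the total removal rate of a solution \<open>v\<close>: \<open>m0 (v t)\<close> for the critical,
  \<open>m0 (v t) + lam t\<close> for the subcritical and \<open>m0 (v (\<beta> (Mt \<beta> t)))\<close> for the alternating
  equations. Multiplying \<open>v t k\<close> by \<open>exp (integral {0..t} \<mu>) ^ k\<close> turns \<open>v\<close> into a solution of the
  removal-free equations \<open>w' = coag w\<close>, which are triangular in \<open>k\<close> and hence have unique
  solutions. So whenever \<open>integral {0..s} \<mu> \<le> integral {0..s} (m0 \<circ> vcrit)\<close>, the solution \<open>v s\<close>
  dominates \<open>vcrit s\<close> componentwise and \<open>m0 (vcrit s) \<le> m0 (v s) \<le> \<mu> s\<close>; for the alternating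
  equations the last inequality holds because mass cannot increase while the removal rate is
  frozen. A last-crossing argument for \<open>s \<mapsto> integral {0..s} (\<mu> - m0 \<circ> vcrit)\<close> then gives
  \<open>integral {0..T} (m0 \<circ> vcrit) \<le> integral {0..T} \<mu>\<close>, and both claims follow by subtracting
  from \<open>T * m0 v0\<close>.\<close>

section \<open>Real analysis\<close>

lemma continuous_on_last_crossing:
  fixes g :: "real \<Rightarrow> real"
  assumes "a \<le> b" and cont: "continuous_on {a..b} g" and "g a \<le> y" "y < g b"
  obtains x where "x \<in> {a..<b}" "g x = y" "\<And>z. z \<in> {x<..b} \<Longrightarrow> y < g z"
proof -
  define A where "A = {a..b} \<inter> g -` {..y}"
  have "closed A"
    unfolding A_def by (rule continuous_closed_preimage[OF cont]) auto
  moreover have "a \<in> A" "bdd_above A"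
    using \<open>a \<le> b\<close> \<open>g a \<le> y\<close> by (auto simp: A_def intro: bdd_aboveI[where M = b])
  ultimately have xA: "Sup A \<in> A"
    using closed_contains_Sup by blast
  then have x: "a \<le> Sup A" "Sup A \<le> b" "g (Sup A) \<le> y"
    by (auto simp: A_def)
  have above: "y < g z" if "z \<in> {Sup A<..b}" for z
  proof (rule ccontr)
    assume "\<not> y < g z"
    with that x have "z \<in> A"
      by (auto simp: A_def)
    then show False
      using cSup_upper[OF _ \<open>bdd_above A\<close>] that by fastforce
  qed
  have "Sup A < b"
    using x \<open>y < g b\<close> by (auto simp: order.order_iff_strict)
  moreover have "g (Sup A) = y"
  proof -
    have "continuous_on {Sup A..b} g"
      using x by (auto intro: continuous_on_subset[OF cont])
    then obtain z where z: "Sup A \<le> z" "z \<le> b" "g z = y"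
      using IVT'[of g "Sup A" y b] x \<open>y < g b\<close> by auto
    have "z = Sup A"
      using above[of z] z by (cases "z = Sup A") auto
    with z show ?thesis by simp
  qed
  ultimately show ?thesis
    using that x above by auto
qed

lemma DERIV_zero_off_countable_imp_le:
  fixes f :: "real \<Rightarrow> real"
  assumes "a \<le> b" and cont: "continuous_on {a..b} f" and "countable C"
    and deriv: "\<And>x. x \<in> {a<..<b} - C \<Longrightarrow> (f has_real_derivative 0) (at x)"
  shows "f b \<le> f a"
proof (rule ccontr)
  assume "\<not> f b \<le> f a"
  then have "a < b" "0 < f b - f a"
    using \<open>a \<le> b\<close> by (auto simp: order.order_iff_strict)
  define s where "s = (f b - f a) / (2 * (b - a))"
  define g where "g x = f x - f a - s * (x - a)" for x
  have "0 < s"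
    using \<open>a < b\<close> \<open>0 < f b - f a\<close> by (simp add: s_def)
  have gb: "g b = (f b - f a) / 2"
    using \<open>a < b\<close> by (simp add: g_def s_def field_simps)
  have cont_g: "continuous_on {a..b} g"
    unfolding g_def by (intro continuous_intros cont)
  text \<open>Choose a level avoiding the countable set of values \<open>g ` C\<close>.\<close>
  have "uncountable {0<..<g b}"
    using gb \<open>0 < f b - f a\<close> by (simp add: uncountable_open_interval)
  then obtain y where y: "0 < y" "y < g b" "y \<notin> g ` C"
    using countable_image[OF \<open>countable C\<close>, of g]
    by (metis countable_subset greaterThanLessThan_iff subsetI)
  obtain x where x: "x \<in> {a..<b}" "g x = y" and above: "\<And>z. z \<in> {x<..b} \<Longrightarrow> y < g z"
    using continuous_on_last_crossing[OF \<open>a \<le> b\<close> cont_g, of y] y by (auto simp: g_def)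
  have "x \<in> {a<..<b} - C"
    using x y by (cases "x = a") (auto simp: g_def)
  then have "(g has_real_derivative - s) (at x)"
    unfolding g_def by (auto intro!: derivative_eq_intros deriv)
  then obtain d where "0 < d" and below: "\<And>h. 0 < h \<Longrightarrow> h < d \<Longrightarrow> g (x + h) < g x"
    using DERIV_neg_dec_right \<open>0 < s\<close> by (metis neg_less_0_iff_less)
  define h where "h = min (d / 2) (b - x)"
  have "0 < h" "h < d" "x + h \<in> {x<..b}"
    using \<open>0 < d\<close> x by (auto simp: h_def)
  then show False
    using below[of h] above[of "x + h"] x by simp
qed

lemma DERIV_zero_off_countable_imp_eq:
  fixes f :: "real \<Rightarrow> real"
  assumes "a \<le> b" and cont: "continuous_on {a..b} f" and "countable C"
    and deriv: "\<And>x. x \<in> {a<..<b} - C \<Longrightarrow> (f has_real_derivative 0) (at x)"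
  shows "f b = f a"
proof -
  have "(\<lambda>x. - f x) b \<le> (\<lambda>x. - f x) a"
  proof (rule DERIV_zero_off_countable_imp_le[OF \<open>a \<le> b\<close> _ \<open>countable C\<close>])
    show "continuous_on {a..b} (\<lambda>x. - f x)"
      using cont by (intro continuous_intros)
    show "((\<lambda>x. - f x) has_real_derivative 0) (at x)" if "x \<in> {a<..<b} - C" for x
      using DERIV_minus[OF deriv[OF that]] by simp
  qed
  then show ?thesis
    using DERIV_zero_off_countable_imp_le[OF assms] by simp
qed

lemma integral_nonneg_if_nonneg_where_primitive_nonpos:
  fixes g :: "real \<Rightarrow> real"
  assumes "0 \<le> T" and int: "g integrable_on {0..T}"
    and nonneg: "\<And>s. s \<in> {0<..T} \<Longrightarrow> integral {0..s} g \<le> 0 \<Longrightarrow> 0 \<le> g s"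
  shows "0 \<le> integral {0..T} g"
proof (rule ccontr)
  define D where "D s = - integral {0..s} g" for s
  assume "\<not> 0 \<le> integral {0..T} g"
  then have "D 0 \<le> 0" "0 < D T"
    by (auto simp: D_def)
  moreover have "continuous_on {0..T} D"
    unfolding D_def by (intro continuous_intros indefinite_integral_continuous_1 int)
  ultimately obtain t where t: "t \<in> {0..<T}" "D t = 0" and pos: "\<And>s. s \<in> {t<..T} \<Longrightarrow> 0 < D s"
    using continuous_on_last_crossing[OF \<open>0 \<le> T\<close>] by metis
  have "(g has_integral integral {t..T} g) {t<..<T}"
    using has_integral_open_interval[of g _ t T] integrable_on_subinterval[OF int, of t T] t
    by (simp add: integrable_integral)
  then have "0 \<le> integral {t..T} g"
    by (rule has_integral_nonneg) (use pos nonneg t in \<open>force simp: D_def\<close>)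
  moreover have "integral {0..t} g + integral {t..T} g = integral {0..T} g"
    using t int by (intro Henstock_Kurzweil_Integration.integral_combine) auto
  ultimately show False
    using t \<open>0 < D T\<close> by (simp add: D_def)
qed

lemma DERIV_indefinite_integral:
  fixes f :: "real \<Rightarrow> real"
  assumes "f integrable_on {a..b}" "t \<in> {a<..<b}" "isCont f t"
  shows "((\<lambda>u. integral {a..u} f) has_real_derivative f t) (at t)"
proof -
  have "((\<lambda>u. integral {a..u} f) has_vector_derivative f t) (at t within {a..b})"
    using integral_has_vector_derivative_continuous_at[of f a b t "{}"] assms
    by (auto intro: continuous_at_imp_continuous_at_within)
  moreover have "at t within {a..b} = at t"
    using assms(2) by (intro at_within_interior) auto
  ultimately show ?thesis
    by (simp add: has_real_derivative_iff_has_vector_derivative)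
qed

lemma continuous_on_primitive:
  fixes f F :: "real \<Rightarrow> real"
  assumes prim: "\<And>t. t \<in> {a..b} \<Longrightarrow> (f has_integral (F t - F a)) {a..t}"
  shows "continuous_on {a..b} F"
proof (cases "a \<le> b")
  case True
  then have "f integrable_on {a..b}"
    using prim[of b] by auto
  then have "continuous_on {a..b} (\<lambda>t. F a + integral {a..t} f)"
    by (intro continuous_intros indefinite_integral_continuous_1)
  then show ?thesis
    by (rule continuous_on_eq) (use integral_unique[OF prim] in simp)
qed simp

lemma DERIV_primitive:
  fixes f F :: "real \<Rightarrow> real"
  assumes prim: "\<And>t. t \<in> {a..b} \<Longrightarrow> (f has_integral (F t - F a)) {a..t}"
    and "t \<in> {a<..<b}" "isCont f t"
  shows "(F has_real_derivative f t) (at t)"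
proof -
  have "f integrable_on {a..b}"
    using prim[of b] \<open>t \<in> {a<..<b}\<close> by auto
  then have "((\<lambda>u. F a + integral {a..u} f) has_real_derivative f t) (at t)"
    using DERIV_indefinite_integral[of f a b t] assms by (auto intro!: derivative_eq_intros)
  then show ?thesis
    by (rule has_field_derivative_transform_within_open[of _ _ _ "{a<..<b}"])
      (use \<open>t \<in> {a<..<b}\<close> integral_unique[OF prim] in auto)
qed

section \<open>The coagulation term\<close>

lemma coag_cong:
  assumes "\<And>l. 1 \<le> l \<Longrightarrow> l < k \<Longrightarrow> v l = v' l"
  shows "coag v k = coag v' k"
  unfolding coag_def using assms by (intro arg_cong[where f = "\<lambda>x. _ * x"] sum.cong) auto

lemma coag_mult_power: "coag (\<lambda>l. v l * c ^ l) k = coag v k * c ^ k"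
proof -
  have "(\<Sum>l = 1..k - 1. v l * c ^ l * (v (k - l) * c ^ (k - l)))
      = (\<Sum>l = 1..k - 1. v l * v (k - l) * c ^ k)"
  proof (rule sum.cong)
    fix l assume "l \<in> {1..k - 1}"
    then have "l + (k - l) = k"
      by auto
    then have "c ^ l * c ^ (k - l) = c ^ k"
      by (metis power_add)
    then show "v l * c ^ l * (v (k - l) * c ^ (k - l)) = v l * v (k - l) * c ^ k"
      by (metis mult.assoc mult.left_commute)
  qed simp
  then show ?thesis
    unfolding coag_def by (simp add: sum_distrib_right mult.assoc)
qed

lemma isCont_coag:
  assumes "\<And>l. 1 \<le> l \<Longrightarrow> l < k \<Longrightarrow> isCont (\<lambda>s. v s l) t"
  shows "isCont (\<lambda>s. coag (v s) k) t"
  unfolding coag_def using assms by (intro continuous_intros) auto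

text \<open>Symmetrising \<open>l \<leftrightarrow> k - l\<close> in the factor \<open>k = l + (k - l)\<close>.\<close>
lemma coag_eq_weighted_sum: "coag a k = (\<Sum>l = 1..k - 1. real l * a l * a (k - l))"
proof -
  have reflect: "(\<Sum>l = 1..k - 1. real (k - l) * a l * a (k - l)) = (\<Sum>l = 1..k - 1. real l * a l * a (k - l))"
    by (rule sum.reindex_bij_witness[where i = "\<lambda>l. k - l" and j = "\<lambda>l. k - l"]) auto
  have "real k * (\<Sum>l = 1..k - 1. a l * a (k - l))
      = (\<Sum>l = 1..k - 1. real (k - l) * a l * a (k - l) + real l * a l * a (k - l))"
    unfolding sum_distrib_left by (intro sum.cong) (auto simp: of_nat_diff algebra_simps)
  also have "\<dots> = 2 * (\<Sum>l = 1..k - 1. real l * a l * a (k - l))"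
    unfolding sum.distrib reflect by simp
  finally show ?thesis
    unfolding coag_def by simp
qed

lemma sum_coag: "(\<Sum>k = 1..n. coag a k) = (\<Sum>l = 1..n. real l * a l * (\<Sum>j = 1..n - l. a j))"
proof (induction n)
  case (Suc n)
  have "(\<Sum>k = 1..Suc n. coag a k)
      = (\<Sum>l = 1..n. real l * a l * (\<Sum>j = 1..n - l. a j)) + (\<Sum>l = 1..n. real l * a l * a (Suc n - l))"
    using Suc by (simp add: coag_eq_weighted_sum)
  also have "\<dots> = (\<Sum>l = 1..n. real l * a l * (\<Sum>j = 1..Suc n - l. a j))"
    unfolding sum.distrib[symmetric]
    by (intro sum.cong) (auto simp: Suc_diff_le algebra_simps)
  finally show ?case
    by simp
qed simp

section \<open>Coagulation equations with removal\<close>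

text \<open>The critical, subcritical and alternating equations are the instances with total removal
  rate \<open>\<mu>\<close> equal to \<open>m0 (v t)\<close>, \<open>m0 (v t) + \<lambda> t\<close> and \<open>m0 (v (\<beta> (Mt \<beta> t)))\<close>.\<close>
definition coag_removal_sol :: "real \<Rightarrow> (real \<Rightarrow> real) \<Rightarrow> (real \<Rightarrow> nat \<Rightarrow> real) \<Rightarrow> bool" where
  "coag_removal_sol b \<mu> v \<longleftrightarrow>
     \<mu> integrable_on {0..b} \<and> (\<forall>k\<ge>1. continuous_on {0..b} (\<lambda>t. v t k)) \<and>
     (\<exists>C. countable C \<and> (\<forall>t \<in> {0<..<b} - C. isCont \<mu> t \<and>
        (\<forall>k\<ge>1. ((\<lambda>s. v s k) has_real_derivative coag (v t) k - real k * v t k * \<mu> t) (at t))))"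

lemma coag_removal_solI:
  assumes "countable C" "\<mu> integrable_on {0..b}"
    and "\<And>k. 1 \<le> k \<Longrightarrow> continuous_on {0..b} (\<lambda>t. v t k)"
    and "\<And>t. t \<in> {0<..<b} - C \<Longrightarrow> isCont \<mu> t"
    and "\<And>k t. 1 \<le> k \<Longrightarrow> t \<in> {0<..<b} - C \<Longrightarrow>
      ((\<lambda>s. v s k) has_real_derivative coag (v t) k - real k * v t k * \<mu> t) (at t)"
  shows "coag_removal_sol b \<mu> v"
  unfolding coag_removal_sol_def using assms by (intro conjI exI[of _ C]) auto

lemma coag_removal_solE:
  assumes "coag_removal_sol b \<mu> v"
  obtains C where "countable C" "\<mu> integrable_on {0..b}"
    "\<And>k. 1 \<le> k \<Longrightarrow> continuous_on {0..b} (\<lambda>t. v t k)"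
    "\<And>t. t \<in> {0<..<b} - C \<Longrightarrow> isCont \<mu> t"
    "\<And>k t. 1 \<le> k \<Longrightarrow> t \<in> {0<..<b} - C \<Longrightarrow>
      ((\<lambda>s. v s k) has_real_derivative coag (v t) k - real k * v t k * \<mu> t) (at t)"
proof -
  obtain C where "countable C" and C: "\<forall>t \<in> {0<..<b} - C. isCont \<mu> t \<and>
      (\<forall>k\<ge>1. ((\<lambda>s. v s k) has_real_derivative coag (v t) k - real k * v t k * \<mu> t) (at t))"
    using assms unfolding coag_removal_sol_def by blast
  moreover have "\<mu> integrable_on {0..b}" "\<forall>k\<ge>1. continuous_on {0..b} (\<lambda>t. v t k)"
    using assms unfolding coag_removal_sol_def by simp_all
  ultimately show ?thesis
    using that by simp
qed

text \<open>Without removal the equations are triangular: \<open>coag w k\<close> only involves \<open>w l\<close> for \<open>l < k\<close>.\<close>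
lemma coag_removal_sol_zero_unique:
  assumes sol: "coag_removal_sol b (\<lambda>_. 0) w" and sol': "coag_removal_sol b (\<lambda>_. 0) w'"
    and init: "\<And>k. 1 \<le> k \<Longrightarrow> w 0 k = w' 0 k"
  shows "1 \<le> k \<Longrightarrow> t \<in> {0..b} \<Longrightarrow> w t k = w' t k"
proof (induction k arbitrary: t rule: less_induct)
  case (less k)
  obtain C where C: "countable C" "\<And>k. 1 \<le> k \<Longrightarrow> continuous_on {0..b} (\<lambda>t. w t k)"
    "\<And>k t. 1 \<le> k \<Longrightarrow> t \<in> {0<..<b} - C \<Longrightarrow> ((\<lambda>s. w s k) has_real_derivative coag (w t) k) (at t)"
    using sol by (rule coag_removal_solE) simp_all
  obtain C' where C': "countable C'" "\<And>k. 1 \<le> k \<Longrightarrow> continuous_on {0..b} (\<lambda>t. w' t k)"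
    "\<And>k t. 1 \<le> k \<Longrightarrow> t \<in> {0<..<b} - C' \<Longrightarrow> ((\<lambda>s. w' s k) has_real_derivative coag (w' t) k) (at t)"
    using sol' by (rule coag_removal_solE) simp_all
  have "w t k - w' t k = w 0 k - w' 0 k"
  proof (rule DERIV_zero_off_countable_imp_eq[of 0 t "\<lambda>s. w s k - w' s k" "C \<union> C'"])
    show "0 \<le> t" "countable (C \<union> C')"
      using less.prems C(1) C'(1) by auto
    show "continuous_on {0..t} (\<lambda>s. w s k - w' s k)"
      using less.prems
      by (intro continuous_on_diff continuous_on_subset[OF C(2)] continuous_on_subset[OF C'(2)]) auto
    fix s assume s: "s \<in> {0<..<t} - (C \<union> C')"
    then have s': "s \<in> {0<..<b} - C" "s \<in> {0<..<b} - C'"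
      using less.prems by auto
    have "coag (w s) k = coag (w' s) k"
      by (rule coag_cong, rule less.IH) (use s' in auto)
    then show "((\<lambda>s. w s k - w' s k) has_real_derivative 0) (at s)"
      using DERIV_diff[OF C(3)[OF less.prems(1) s'(1)] C'(3)[OF less.prems(1) s'(2)]] by simp
  qed
  then show ?case
    using init[OF less.prems(1)] by simp
qed

lemma coag_removal_sol_rescale:
  assumes "coag_removal_sol b \<mu> v"
  shows "coag_removal_sol b (\<lambda>_. 0) (\<lambda>t k. v t k * exp (integral {0..t} \<mu>) ^ k)"
proof -
  obtain C where C: "countable C" "\<mu> integrable_on {0..b}"
    "\<And>k. 1 \<le> k \<Longrightarrow> continuous_on {0..b} (\<lambda>t. v t k)" "\<And>t. t \<in> {0<..<b} - C \<Longrightarrow> isCont \<mu> t"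
    "\<And>k t. 1 \<le> k \<Longrightarrow> t \<in> {0<..<b} - C \<Longrightarrow>
      ((\<lambda>s. v s k) has_real_derivative coag (v t) k - real k * v t k * \<mu> t) (at t)"
    using assms by (rule coag_removal_solE) blast
  let ?E = "\<lambda>t. exp (integral {0..t} \<mu>)"
  show ?thesis
  proof (rule coag_removal_solI[OF C(1)])
    show "continuous_on {0..b} (\<lambda>t. v t k * ?E t ^ k)" if "1 \<le> k" for k
      by (intro continuous_intros C(3) that indefinite_integral_continuous_1 C(2))
    fix k :: nat and t :: real assume "1 \<le> k" and t: "t \<in> {0<..<b} - C"
    have "((\<lambda>s. v s k * ?E s ^ k) has_real_derivative
        (coag (v t) k - real k * v t k * \<mu> t) * ?E t ^ k + v t k * (?E t ^ k * (real k * \<mu> t))) (at t)"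
      unfolding exp_of_nat_mult[symmetric]
      using C(5)[OF \<open>1 \<le> k\<close> t] DERIV_indefinite_integral[OF C(2), of t] C(4)[OF t] t
      by (auto intro!: derivative_eq_intros)
    then show "((\<lambda>s. v s k * ?E s ^ k) has_real_derivative
        coag (\<lambda>l. v t l * ?E t ^ l) k - real k * (v t k * ?E t ^ k) * 0) (at t)"
      by (rule DERIV_cong) (simp add: coag_mult_power ring_distribs)
  qed (simp_all add: integrable_0)
qed

lemma coag_removal_sol_rescaled_eq:
  assumes "coag_removal_sol b \<mu> v" "coag_removal_sol b \<mu>' v'" "v 0 = v' 0" "1 \<le> k" "t \<in> {0..b}"
  shows "v t k * exp (integral {0..t} \<mu>) ^ k = v' t k * exp (integral {0..t} \<mu>') ^ k"
proof (rule coag_removal_sol_zero_unique[OF coag_removal_sol_rescale coag_removal_sol_rescale])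
  show "v 0 k * exp (integral {0..0} \<mu>) ^ k = v' 0 k * exp (integral {0..0} \<mu>') ^ k" for k
    using \<open>v 0 = v' 0\<close> by simp
qed (use assms in auto)

lemma m0_mono:
  assumes "in_N x" "in_N y" "\<And>k. 1 \<le> k \<Longrightarrow> x k \<le> y k"
  shows "m0 x \<le> m0 y"
  unfolding m0_def using assms unfolding in_N_def by (intro suminf_le) auto

lemma partial_sum_le_m0:
  assumes "in_N x"
  shows "(\<Sum>k = 1..n. x k) \<le> m0 x"
proof -
  have "(\<Sum>k = 1..n. x k) = (\<Sum>k<n. x (Suc k))"
    by (simp add: sum.atLeast1_atMost_eq)
  also have "\<dots> \<le> m0 x"
    using assms unfolding m0_def in_N_def by (intro sum_le_suminf) auto
  finally show ?thesis .
qed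

lemma m0_le_if_partial_sums_le:
  assumes "in_N x" "\<And>n. (\<Sum>k = 1..n. x k) \<le> c"
  shows "m0 x \<le> c"
  unfolding m0_def using assms unfolding in_N_def
  by (intro suminf_le_const) (auto simp: sum.atLeast1_atMost_eq[symmetric])

text \<open>Both solutions rescale to the same solution of the removal-free equations.\<close>
lemma coag_removal_sol_m0_le:
  assumes sol: "coag_removal_sol b \<mu> v" and sol': "coag_removal_sol b \<mu>' v'" and "v 0 = v' 0"
    and "t \<in> {0..b}" "in_N (v t)" "in_N (v' t)"
    and less_removal: "integral {0..t} \<mu> \<le> integral {0..t} \<mu>'"
  shows "m0 (v' t) \<le> m0 (v t)"
proof (rule m0_mono)
  fix k :: nat assume "1 \<le> k"
  have "v' t k * exp (integral {0..t} \<mu>) ^ k \<le> v' t k * exp (integral {0..t} \<mu>') ^ k"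
    using less_removal \<open>in_N (v' t)\<close> \<open>1 \<le> k\<close> unfolding in_N_def
    by (intro mult_left_mono power_mono) auto
  also have "\<dots> = v t k * exp (integral {0..t} \<mu>) ^ k"
    using coag_removal_sol_rescaled_eq[OF sol sol'] assms \<open>1 \<le> k\<close> by simp
  finally show "v' t k \<le> v t k"
    by simp
qed (use assms in auto)

lemma integral_m0_le_integral_removal:
  assumes "0 \<le> T"
    and sol: "coag_removal_sol T \<mu> v" and crit: "coag_removal_sol T (\<lambda>s. m0 (w s)) w" and "v 0 = w 0"
    and in_N: "\<And>s. s \<in> {0..T} \<Longrightarrow> in_N (v s)" "\<And>s. s \<in> {0..T} \<Longrightarrow> in_N (w s)"
    and rate_ge_m0: "\<And>s. s \<in> {0<..T} \<Longrightarrow> m0 (v s) \<le> \<mu> s"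
  shows "integral {0..T} (\<lambda>s. m0 (w s)) \<le> integral {0..T} \<mu>"
proof -
  have int: "\<mu> integrable_on {0..T}" "(\<lambda>s. m0 (w s)) integrable_on {0..T}"
    using sol crit by (simp_all add: coag_removal_sol_def)
  have "0 \<le> integral {0..T} (\<lambda>s. \<mu> s - m0 (w s))"
  proof (rule integral_nonneg_if_nonneg_where_primitive_nonpos[OF \<open>0 \<le> T\<close>])
    show "(\<lambda>s. \<mu> s - m0 (w s)) integrable_on {0..T}"
      using int by (rule integrable_diff)
    fix s assume s: "s \<in> {0<..T}" and "integral {0..s} (\<lambda>s. \<mu> s - m0 (w s)) \<le> 0"
    moreover have "\<mu> integrable_on {0..s}" "(\<lambda>s. m0 (w s)) integrable_on {0..s}"
      using s int by (auto intro: integrable_on_subinterval)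
    ultimately have "integral {0..s} \<mu> \<le> integral {0..s} (\<lambda>s. m0 (w s))"
      by (simp add: integral_diff)
    then have "m0 (w s) \<le> m0 (v s)"
      using s in_N by (intro coag_removal_sol_m0_le[OF sol crit \<open>v 0 = w 0\<close>]) auto
    then show "0 \<le> \<mu> s - m0 (w s)"
      using rate_ge_m0[OF s] by simp
  qed
  then show ?thesis
    using int by (simp add: integral_diff)
qed

lemma sub_sol_m0_integrable:
  assumes "sub_sol lam v0 v"
  shows "(\<lambda>s. m0 (v s)) integrable_on {0..b}"
proof -
  have "mono_on {0..b} (\<lambda>t. m0 (v 0) - m0 (v t))"
    using assms unfolding sub_sol_def by (auto intro: mono_on_subset)
  then have "(\<lambda>t. m0 (v 0) - (m0 (v 0) - m0 (v t))) integrable_on {0..b}"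
    by (intro integrable_diff integrable_const_ivl integrable_on_mono_on)
  then show ?thesis
    by simp
qed

lemma sub_sol_coag_removal_sol:
  assumes sol: "sub_sol lam v0 v" and lam: "continuous_on {0..} lam"
  shows "coag_removal_sol b (\<lambda>s. m0 (v s) + lam s) v"
proof -
  define f where "f k s = coag (v s) k - real k * v s k * m0 (v s) - lam s * real k * v s k" for k s
  have prim: "(f k has_integral (v t k - v 0 k)) {0..t}" if "1 \<le> k" "t \<in> {0..b}" for k t
    using sol that unfolding sub_sol_def f_def[abs_def] by auto
  have cont: "continuous_on {0..b} (\<lambda>t. v t k)" if "1 \<le> k" for k
    using continuous_on_primitive[of 0 b "f k" "\<lambda>t. v t k"] prim[OF that] by simp
  have int_lam: "lam integrable_on {0..b}"
    by (rule integrable_continuous_interval, rule continuous_on_subset[OF lam]) auto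
  define C where "C = {t \<in> {0<..<b}. \<not> isCont (\<lambda>t. m0 (v 0) - m0 (v t)) t}"
  have "countable C"
    unfolding C_def using sol unfolding sub_sol_def
    by (intro mono_on_ctble_discont_open) (auto intro: mono_on_subset)
  show ?thesis
  proof (rule coag_removal_solI[OF \<open>countable C\<close> integrable_add[OF sub_sol_m0_integrable[OF sol] int_lam] cont])
    fix t assume t: "t \<in> {0<..<b} - C"
    have "isCont (\<lambda>t. m0 (v 0) - m0 (v t)) t"
      using t by (simp add: C_def)
    then have "isCont (\<lambda>t. m0 (v 0) - (m0 (v 0) - m0 (v t))) t"
      by (rule isCont_diff[OF continuous_const])
    then have cont_m0: "isCont (\<lambda>s. m0 (v s)) t"
      by simp
    have cont_lam: "isCont lam t"
      using t by (intro continuous_on_interior[OF lam]) auto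
    then show "isCont (\<lambda>s. m0 (v s) + lam s) t"
      using cont_m0 by (intro continuous_intros)
    fix k :: nat assume "1 \<le> k"
    have cont_v: "isCont (\<lambda>s. v s l) t" if "1 \<le> l" for l
      using t by (intro continuous_on_interior[OF cont[OF that]]) auto
    have "isCont (f k) t"
      unfolding f_def[abs_def] using cont_v \<open>1 \<le> k\<close>
      by (intro continuous_intros isCont_coag cont_m0 cont_lam) auto
    then have "((\<lambda>s. v s k) has_real_derivative f k t) (at t)"
      using t prim[OF \<open>1 \<le> k\<close>] by (intro DERIV_primitive[of 0 b]) auto
    then show "((\<lambda>s. v s k) has_real_derivative coag (v t) k - real k * v t k * (m0 (v t) + lam t)) (at t)"
      by (rule DERIV_cong) (simp add: f_def algebra_simps)
  qed
qed

section \<open>Burning times and the alternating equations\<close>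

lemma Mt_eqI:
  assumes "burning_times \<beta>" "\<beta> j < t" "t \<le> \<beta> (Suc j)"
  shows "Mt \<beta> t = j"
  unfolding Mt_def
proof (rule Greatest_equality)
  show "i \<le> j" if "\<beta> i < t" for i
  proof (rule ccontr)
    assume "\<not> i \<le> j"
    then have "\<beta> (Suc j) \<le> \<beta> i"
      using assms(1) by (simp add: burning_times_def strict_mono_less_eq)
    with that assms(3) show False
      by simp
  qed
qed (use assms in simp)

lemma burning_times_nonneg: "burning_times \<beta> \<Longrightarrow> 0 \<le> \<beta> j"
  unfolding burning_times_def by (metis le0 strict_mono_less_eq)

lemma burning_times_unbounded:
  assumes "burning_times \<beta>"
  obtains n where "b \<le> \<beta> n"
proof -
  have "eventually (\<lambda>n. b \<le> \<beta> n) sequentially"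
    using assms unfolding burning_times_def by (simp add: filterlim_at_top)
  then obtain N where "\<forall>n\<ge>N. b \<le> \<beta> n"
    by (auto simp: eventually_sequentially)
  then show ?thesis
    using that by blast
qed

lemma burning_times_bracket:
  assumes "burning_times \<beta>" "0 < t"
  obtains j where "\<beta> j < t" "t \<le> \<beta> (Suc j)"
proof -
  obtain n where "t \<le> \<beta> n"
    using burning_times_unbounded[OF assms(1)] by blast
  define i where "i = (LEAST n. t \<le> \<beta> n)"
  have "t \<le> \<beta> i"
    unfolding i_def by (rule LeastI) fact
  moreover have "i \<noteq> 0"
    using \<open>t \<le> \<beta> i\<close> assms unfolding burning_times_def by (cases i) auto
  then obtain j where "i = Suc j"
    using not0_implies_Suc by blast
  moreover have "\<beta> j < t"
    using not_less_Least[of j "\<lambda>n. t \<le> \<beta> n"] \<open>i = Suc j\<close> by (simp add: i_def)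
  ultimately show ?thesis
    using that by simp
qed

lemma integrable_on_burning_step:
  fixes g :: "nat \<Rightarrow> real"
  assumes bt: "burning_times \<beta>"
  shows "(\<lambda>s. g (Mt \<beta> s)) integrable_on {0..b}"
proof -
  have "(\<lambda>s. g (Mt \<beta> s)) integrable_on {0..\<beta> j}" for j
  proof (induction j)
    case 0
    then show ?case
      using bt integrable_on_refl[of _ "0::real"] by (simp add: burning_times_def)
  next
    case (Suc j)
    have "\<beta> j < \<beta> (Suc j)"
      using bt by (simp add: burning_times_def strict_mono_def)
    have "(\<lambda>s. g (Mt \<beta> s)) integrable_on {\<beta> j..\<beta> (Suc j)}"
    proof (rule integrable_spike_finite[where S = "{\<beta> j}" and f = "\<lambda>_. g j"])
      show "g (Mt \<beta> x) = g j" if "x \<in> {\<beta> j..\<beta> (Suc j)} - {\<beta> j}" for x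
        using that Mt_eqI[OF bt, of j x] by auto
    qed auto
    then show ?case
      using Suc.IH \<open>\<beta> j < \<beta> (Suc j)\<close> burning_times_nonneg[OF bt, of j]
      by (meson Henstock_Kurzweil_Integration.integrable_combine less_imp_le)
  qed
  moreover obtain n where "b \<le> \<beta> n"
    using burning_times_unbounded[OF bt] by blast
  ultimately show ?thesis
    by (metis atLeastatMost_subset_iff integrable_on_subinterval order_refl)
qed

lemma isCont_burning_step:
  assumes bt: "burning_times \<beta>" and "0 < t" "t \<notin> range \<beta>"
  shows "isCont (\<lambda>s. g (Mt \<beta> s)) t"
proof -
  obtain j where "\<beta> j < t" "t \<le> \<beta> (Suc j)"
    using burning_times_bracket[OF bt \<open>0 < t\<close>] by blast
  then have "t \<in> {\<beta> j<..<\<beta> (Suc j)}"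
    using \<open>t \<notin> range \<beta>\<close> by (auto simp: order.order_iff_strict)
  then have "eventually (\<lambda>s. s \<in> {\<beta> j<..<\<beta> (Suc j)}) (nhds t)"
    by (intro eventually_nhds_in_open) auto
  then have "eventually (\<lambda>s. g (Mt \<beta> s) = g j) (nhds t)"
    by eventually_elim (use Mt_eqI[OF bt, of j] in simp)
  then have "isCont (\<lambda>s. g (Mt \<beta> s)) t \<longleftrightarrow> isCont (\<lambda>_. g j) t"
    by (rule isCont_cong)
  then show ?thesis
    by simp
qed

lemma alt_sol_coag_removal_sol:
  assumes bt: "burning_times \<beta>" and sol: "alt_sol \<beta> v0 v"
  shows "coag_removal_sol b (\<lambda>s. m0 (v (\<beta> (Mt \<beta> s)))) v"
proof (rule coag_removal_solI[where C = "range \<beta>"])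
  show "(\<lambda>s. m0 (v (\<beta> (Mt \<beta> s)))) integrable_on {0..b}"
    using integrable_on_burning_step[OF bt, of "\<lambda>j. m0 (v (\<beta> j))"] .
  show "continuous_on {0..b} (\<lambda>t. v t k)" if "1 \<le> k" for k
    using sol that unfolding alt_sol_def by (auto intro: continuous_on_subset)
  show "isCont (\<lambda>s. m0 (v (\<beta> (Mt \<beta> s)))) t" if "t \<in> {0<..<b} - range \<beta>" for t
    using isCont_burning_step[OF bt, of t "\<lambda>j. m0 (v (\<beta> j))"] that by simp
  show "((\<lambda>s. v s k) has_real_derivative coag (v t) k - real k * v t k * m0 (v (\<beta> (Mt \<beta> t)))) (at t)"
    if "1 \<le> k" "t \<in> {0<..<b} - range \<beta>" for k t
    using sol that unfolding alt_sol_def by simp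
qed simp

text \<open>By \<open>sum_coag\<close> the partial mass \<open>\<Sum>k = 1..n. v s k\<close> has derivative
  \<open>\<Sum>l = 1..n. l * v s l * ((\<Sum>j = 1..n - l. v s j) - c)\<close>, which is nonpositive as soon as all
  shorter partial masses are at most \<open>c\<close>.\<close>
lemma partial_mass_le_frozen_rate:
  fixes v :: "real \<Rightarrow> nat \<Rightarrow> real"
  assumes nonneg: "\<And>s k. s \<in> {a..b} \<Longrightarrow> 1 \<le> k \<Longrightarrow> 0 \<le> v s k"
    and cont: "\<And>k. 1 \<le> k \<Longrightarrow> continuous_on {a..b} (\<lambda>s. v s k)"
    and deriv: "\<And>s k. s \<in> {a<..<b} \<Longrightarrow> 1 \<le> k \<Longrightarrow>
      ((\<lambda>s. v s k) has_real_derivative coag (v s) k - real k * v s k * c) (at s)"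
    and init: "\<And>n. (\<Sum>k = 1..n. v a k) \<le> c"
  shows "s \<in> {a..b} \<Longrightarrow> (\<Sum>k = 1..n. v s k) \<le> c"
proof (induction n arbitrary: s)
  case 0
  then show ?case
    using init[of 0] by simp
next
  case (Suc n)
  have shorter: "(\<Sum>k = 1..m. v x k) \<le> c" if "x \<in> {a..b}" "m \<le> n" for x m
    using Suc.IH[OF that(1)] sum_mono2[of "{1..n}" "{1..m}" "v x"] nonneg that by fastforce
  have "(\<Sum>k = 1..Suc n. v s k) \<le> (\<Sum>k = 1..Suc n. v a k)"
  proof (rule DERIV_nonpos_imp_decreasing_open[of a s])
    show "a \<le> s"
      using Suc.prems by simp
    show "continuous_on {a..s} (\<lambda>s. \<Sum>k = 1..Suc n. v s k)"
      using Suc.prems by (intro continuous_on_sum continuous_on_subset[OF cont]) auto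
    fix x assume "a < x" "x < s"
    then have x: "x \<in> {a<..<b}" "x \<in> {a..b}"
      using Suc.prems by auto
    have "((\<lambda>s. \<Sum>k = 1..Suc n. v s k) has_real_derivative
        (\<Sum>k = 1..Suc n. coag (v x) k - real k * v x k * c)) (at x)"
      using x by (intro DERIV_sum deriv) auto
    moreover have "(\<Sum>k = 1..Suc n. coag (v x) k - real k * v x k * c)
        = (\<Sum>l = 1..Suc n. real l * v x l * ((\<Sum>j = 1..Suc n - l. v x j) - c))"
      unfolding sum_subtractf sum_coag by (simp only: right_diff_distrib sum_subtractf)
    moreover have "\<dots> \<le> 0"
      using shorter x nonneg by (intro sum_nonpos mult_nonneg_nonpos) auto
    ultimately show "\<exists>y. ((\<lambda>s. \<Sum>k = 1..Suc n. v s k) has_real_derivative y) (at x) \<and> y \<le> 0"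
      by auto
  qed
  then show ?case
    using init[of "Suc n"] by simp
qed

lemma alt_sol_m0_le_frozen_rate:
  assumes bt: "burning_times \<beta>" and sol: "alt_sol \<beta> v0 v" and "0 < t"
  shows "m0 (v t) \<le> m0 (v (\<beta> (Mt \<beta> t)))"
proof -
  obtain j where j: "\<beta> j < t" "t \<le> \<beta> (Suc j)"
    using burning_times_bracket[OF bt \<open>0 < t\<close>] by blast
  have in_N: "in_N (v s)" if "s \<in> {\<beta> j..\<beta> (Suc j)}" for s
    using sol that burning_times_nonneg[OF bt, of j] unfolding alt_sol_def by auto
  have "(\<Sum>k = 1..n. v t k) \<le> m0 (v (\<beta> j))" for n
  proof (rule partial_mass_le_frozen_rate[of "\<beta> j" "\<beta> (Suc j)"])
    show "0 \<le> v s k" if "s \<in> {\<beta> j..\<beta> (Suc j)}" "1 \<le> k" for s k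
      using in_N[OF that(1)] that(2) by (simp add: in_N_def)
    show "continuous_on {\<beta> j..\<beta> (Suc j)} (\<lambda>s. v s k)" if "1 \<le> k" for k
      using sol that burning_times_nonneg[OF bt, of j] unfolding alt_sol_def
      by (auto intro: continuous_on_subset)
    show "(\<Sum>k = 1..n. v (\<beta> j) k) \<le> m0 (v (\<beta> j))" for n
      using in_N j by (intro partial_sum_le_m0) auto
    fix s :: real and k :: nat assume s: "s \<in> {\<beta> j<..<\<beta> (Suc j)}" and "1 \<le> k"
    have "s \<notin> range \<beta>"
      using s bt unfolding burning_times_def by (auto simp: strict_mono_less)
    moreover have "0 < s" "Mt \<beta> s = j"
      using s burning_times_nonneg[OF bt, of j] Mt_eqI[OF bt] by auto
    ultimately show "((\<lambda>s. v s k) has_real_derivative coag (v s) k - real k * v s k * m0 (v (\<beta> j))) (at s)"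
      using sol \<open>1 \<le> k\<close> unfolding alt_sol_def by auto
  qed (use j in auto)
  then show ?thesis
    using in_N j Mt_eqI[OF bt j] by (intro m0_le_if_partial_sums_le) auto
qed

lemma integral_Phi:
  assumes "(\<lambda>s. m0 (v s)) integrable_on {0..T}"
  shows "integral {0..T} (Phi v) = integral {0..T} (\<lambda>_. m0 (v 0)) - integral {0..T} (\<lambda>s. m0 (v s))"
  unfolding Phi_def using assms by (intro integral_diff) auto

lemma integral_Phi_alt:
  assumes "burning_times \<beta>"
  shows "integral {0..T} (Phi_alt \<beta> v)
    = integral {0..T} (\<lambda>_. m0 (v 0)) - integral {0..T} (\<lambda>s. m0 (v (\<beta> (Mt \<beta> s))))"
  unfolding Phi_alt_def using integrable_on_burning_step[OF assms, of "\<lambda>j. m0 (v (\<beta> j))"]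
  by (intro integral_diff) auto

theorem theorem10:
  fixes v0 :: "nat \<Rightarrow> real" and T :: real and lam :: "real \<Rightarrow> real"
    and vcrit vsub :: "real \<Rightarrow> nat \<Rightarrow> real"
  assumes "in_N_star v0" and "T > 0"
    and "crit_sol v0 vcrit"
    and "continuous_on {0..} lam" and "\<exists>c>0. \<forall>t\<ge>0. c \<le> lam t"
    and "sub_sol lam v0 vsub"
  shows "integral {0..T} (Phi vsub) - integral {0..T} lam \<le> integral {0..T} (Phi vcrit)
    \<and> (\<forall>\<beta> valt. burning_times \<beta> \<longrightarrow> alt_sol \<beta> v0 valt \<longrightarrow>
           integral {0..T} (Phi_alt \<beta> valt) \<le> integral {0..T} (Phi vcrit))"
proof -
  have "0 \<le> T"
    using \<open>T > 0\<close> by simp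
  have crit_sub: "sub_sol (\<lambda>_. 0) v0 vcrit"
    using assms(3) by (simp add: crit_sol_def)
  have crit: "coag_removal_sol T (\<lambda>s. m0 (vcrit s)) vcrit"
    using sub_sol_coag_removal_sol[OF crit_sub] by simp
  have init: "vcrit 0 = v0" "vsub 0 = v0" and in_N: "\<And>s. 0 \<le> s \<Longrightarrow> in_N (vcrit s) \<and> in_N (vsub s)"
    using crit_sub assms(6) by (simp_all add: sub_sol_def)
  have lam_nonneg: "0 \<le> lam s" if "0 \<le> s" for s
    using assms(5) that by (meson less_imp_le order.trans)
  have int_lam: "lam integrable_on {0..T}"
    by (rule integrable_continuous_interval, rule continuous_on_subset[OF assms(4)]) auto
  have Phi_crit: "integral {0..T} (Phi vcrit) = integral {0..T} (\<lambda>_. m0 v0) - integral {0..T} (\<lambda>s. m0 (vcrit s))"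
    using integral_Phi[OF sub_sol_m0_integrable[OF crit_sub]] init by simp
  have "integral {0..T} (\<lambda>s. m0 (vcrit s)) \<le> integral {0..T} (\<lambda>s. m0 (vsub s) + lam s)"
    by (rule integral_m0_le_integral_removal[OF \<open>0 \<le> T\<close> sub_sol_coag_removal_sol[OF assms(6,4)] crit])
      (use init in_N lam_nonneg in auto)
  then have "integral {0..T} (Phi vsub) - integral {0..T} lam \<le> integral {0..T} (Phi vcrit)"
    using integral_Phi[OF sub_sol_m0_integrable[OF assms(6)]] Phi_crit init
      integral_add[OF sub_sol_m0_integrable[OF assms(6)] int_lam] by simp
  moreover have "integral {0..T} (Phi_alt \<beta> valt) \<le> integral {0..T} (Phi vcrit)"
    if bt: "burning_times \<beta>" and alt: "alt_sol \<beta> v0 valt" for \<beta> valt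
  proof -
    have "valt 0 = v0" "\<And>s. 0 \<le> s \<Longrightarrow> in_N (valt s)"
      using alt by (simp_all add: alt_sol_def)
    then have "integral {0..T} (\<lambda>s. m0 (vcrit s)) \<le> integral {0..T} (\<lambda>s. m0 (valt (\<beta> (Mt \<beta> s))))"
      by (intro integral_m0_le_integral_removal[OF \<open>0 \<le> T\<close> alt_sol_coag_removal_sol[OF bt alt] crit])
        (use init in_N alt_sol_m0_le_frozen_rate[OF bt alt] in auto)
    then show ?thesis
      using integral_Phi_alt[OF bt] Phi_crit \<open>valt 0 = v0\<close> by simp
  qed
  ultimately show ?thesis
    by blast
qed

end
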